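(* Let $\mathcal{A}$ be a subring of the algebraic integers (not necessarily closed under complex conjugation). Let $\{\mathcal{W}_i\}_{i=1}^n$ be an equichordal tight fusion frame consisting of $n$ subspaces of dimension $m$ of $\mathbb{F}^k$ ($\mathbb{F}=\mathbb{R}$ or $\mathbb{C}$), with associated orthogonal projections $\{P_i\}_{i=1}^n$. If for all $i\in[n]$ the entries of $kP_i$ lie in $\mathcal{A}$, then \[ \frac{km(mn-k)}{n-1}\in\mathbb{Z}. \]
   Context: The algebraic integers are the complex roots of monic polynomials with integer coefficients. A collection of $m$-dimensional subspaces $\{\mathcal{W}_i\}_{i=1}^n$ of $\mathbb{F}^k$ with orthogonal projections $P_i$ is a tight fusion frame if $\sum_{i=1}^nP_i=AI_k$ for some $A>0$, and equichordal if $\operatorname{trace}(P_iP_j)$ is the same for all $i\neq j$. *)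

theory Defs
  imports "HOL-Computational_Algebra.Polynomial" "Jordan_Normal_Form.DL_Rank"
          "Jordan_Normal_Form.Schur_Decomposition"
begin

definition subring_of_algebraic_integers :: "complex set \<Rightarrow> bool" where
  "subring_of_algebraic_integers R \<longleftrightarrow>
     R \<subseteq> {x. algebraic_int x} \<and> 0 \<in> R \<and> 1 \<in> R \<and>
     (\<forall>x\<in>R. \<forall>y\<in>R. x + y \<in> R \<and> x * y \<in> R \<and> - x \<in> R)"

definition orth_proj :: "nat \<Rightarrow> nat \<Rightarrow> complex mat \<Rightarrow> bool" where
  "orth_proj k m P \<longleftrightarrow> P \<in> carrier_mat k k \<and> P * P = P \<and> mat_adjoint P = P
     \<and> vec_space.rank k P = m"

definition tight_fusion_frame :: "nat \<Rightarrow> nat \<Rightarrow> nat \<Rightarrow> (nat \<Rightarrow> complex mat) \<Rightarrow> bool" where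
  "tight_fusion_frame k m n P \<longleftrightarrow>
     (\<forall>i<n. orth_proj k m (P i)) \<and>
     (\<exists>A::real. A > 0 \<and> (\<forall>r<k. \<forall>s<k.
        (\<Sum>i<n. P i $$ (r, s)) = (if r = s then complex_of_real A else 0)))"

definition mat_trace :: "complex mat \<Rightarrow> complex" where
  "mat_trace A = (\<Sum>i<dim_row A. A $$ (i, i))"

definition equichordal :: "nat \<Rightarrow> (nat \<Rightarrow> complex mat) \<Rightarrow> bool" where
  "equichordal n P \<longleftrightarrow> (\<exists>c. \<forall>i<n. \<forall>j<n. i \<noteq> j \<longrightarrow> mat_trace (P i * P j) = c)"

end

theory Submission
  imports Defs
begin

text \<open>
  An idempotent of rank \<open>r\<close> factors as \<open>BC\<close> with \<open>CB = I\<^sub>r\<close>, so its trace is its rank;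
  hence \<open>tr P\<^sub>i = m\<close>.
  Comparing traces in \<open>\<Sum>\<^sub>i P\<^sub>i = A I\<^sub>k\<close> gives \<open>nm = kA\<close>, and multiplying
  it by \<open>P\<^sub>1\<close> before taking traces gives \<open>m + (n - 1) c = Am\<close>, where \<open>c\<close> is the
  equichordal constant. Hence \<open>k\<^sup>2c = km(mn - k)/(n - 1)\<close>. On the other hand
  \<open>k\<^sup>2c = tr((kP\<^sub>1)(kP\<^sub>2))\<close> is a sum of products of entries in \<open>\<A>\<close>, hence an algebraic
  integer; being rational, it is an integer.
\<close>

lemma trace_mult_comm:
  fixes B C :: "'a :: comm_semiring_0 mat"
  assumes B: "B \<in> carrier_mat n r" and C: "C \<in> carrier_mat r n"
  shows "(\<Sum>i<n. (B * C) $$ (i, i)) = (\<Sum>l<r. (C * B) $$ (l, l))"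
proof -
  have "(\<Sum>i<n. (B * C) $$ (i, i)) = (\<Sum>i<n. \<Sum>l<r. B $$ (i, l) * C $$ (l, i))"
    using B C by (intro sum.cong) (auto simp: scalar_prod_def lessThan_atLeast0)
  also have "\<dots> = (\<Sum>l<r. \<Sum>i<n. C $$ (l, i) * B $$ (i, l))"
    by (subst sum.swap) (simp add: mult.commute[of "B $$ _"])
  also have "\<dots> = (\<Sum>l<r. (C * B) $$ (l, l))"
    using B C by (intro sum.cong) (auto simp: scalar_prod_def lessThan_atLeast0)
  finally show ?thesis .
qed

lemma idempotent_mult_cols:
  assumes P: "P \<in> carrier_mat n n" and idem: "P * P = P"
    and B: "B \<in> carrier_mat n r" and cols: "set (cols B) \<subseteq> set (cols P)"
  shows "P * B = B"
proof (rule eq_matI)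
  fix i l assume "i < dim_row B" and "l < dim_col B"
  then have il: "i < n" "l < r" using B by auto
  then obtain j where j: "j < n" "col B l = col P j"
    using B P cols cols_length cols_nth in_set_conv_nth
    by (metis carrier_matD(2) subsetD)
  have "(P * B) $$ (i, l) = (P *\<^sub>v col P j) $ i" using il j P B by simp
  also have "P *\<^sub>v col P j = col (P * P) j" using col_mult2[OF P P j(1)] by simp
  also have "\<dots> = col B l" using idem j by simp
  finally show "(P * B) $$ (i, l) = B $$ (i, l)" using il B by simp
qed (use P B in auto)

context vec_space
begin

lemma obtain_basis_of_cols:
  assumes A: "A \<in> carrier_mat n nc"
  obtains S where "S \<subseteq> set (cols A)" "lin_indpt S" "rank A = card S" "set (cols A) \<subseteq> span S"
proof -
  obtain S where max: "maximal S (\<lambda>T. T \<subseteq> set (cols A) \<and> lin_indpt T)"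
    using maximal_exists_superset[of "set (cols A)" "\<lambda>T. T \<subseteq> set (cols A) \<and> lin_indpt T" "{}"]
    by (auto simp: lin_dep_def)
  have S: "S \<subseteq> set (cols A)" "lin_indpt S" using max unfolding maximal_def by auto
  have car: "set (cols A) \<subseteq> carrier_vec n" using A cols_dim by blast
  have "v \<in> span S" if v: "v \<in> set (cols A)" for v
  proof (cases "v \<in> S")
    case True then show ?thesis using in_own_span[of S] S car by blast
  next
    case False
    then have "lin_dep (insert v S)" using max v S unfolding maximal_def by blast
    then show ?thesis using lin_dep_iff_in_span[of S v] S car v False by auto
  qed
  then show ?thesis using that S rank_card_indpt[OF A max] by blast
qed

lemma rank_factorization:
  assumes A: "A \<in> carrier_mat n nc"
  obtains B C where "B \<in> carrier_mat n (rank A)" "C \<in> carrier_mat (rank A) nc" "A = B * C"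
    "set (cols B) \<subseteq> set (cols A)" "distinct (cols B)" "lin_indpt (set (cols B))"
proof -
  obtain S where S: "S \<subseteq> set (cols A)" "lin_indpt S" "rank A = card S"
    and span: "set (cols A) \<subseteq> span S"
    using obtain_basis_of_cols[OF A] by blast
  obtain bs where bs: "set bs = S" "distinct bs"
    using S(1) finite_distinct_list finite_subset by blast
  have bs_car: "set bs \<subseteq> carrier_vec n" using bs S(1) A cols_dim by blast
  define B where "B = mat_of_cols n bs"
  have rank: "rank A = length bs" using S(3) bs distinct_card by metis
  have B: "B \<in> carrier_mat n (rank A)" unfolding B_def rank by simp
  have colsB: "cols B = bs" unfolding B_def using bs_car by simp
  have "\<exists>x. x \<in> carrier_vec (rank A) \<and> col A j = B *\<^sub>v x" if j: "j < nc" for j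
  proof -
    have "col A j \<in> span (set bs)" using j A span bs by (metis cols_length cols_nth nth_mem carrier_matD(2) subsetD)
    then obtain c where "col A j = lincomb_list c bs"
      using span_list_as_span[OF bs_car] unfolding span_list_def by auto
    also have "\<dots> = B *\<^sub>v vec (rank A) c"
      unfolding B_def rank using bs_car by (intro lincomb_list_as_mat_mult) auto
    finally show ?thesis by (intro exI[of _ "vec (rank A) c"]) auto
  qed
  then obtain X where X: "\<And>j. j < nc \<Longrightarrow> X j \<in> carrier_vec (rank A) \<and> col A j = B *\<^sub>v X j"
    by metis
  define C where "C = mat_of_cols (rank A) (map X [0..<nc])"
  have C: "C \<in> carrier_mat (rank A) nc"
    unfolding C_def using mat_of_cols_carrier(1)[of "rank A" "map X [0..<nc]"] by simp
  have "A = B * C"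
  proof (rule eq_matI)
    fix i j assume "i < dim_row (B * C)" and "j < dim_col (B * C)"
    then have ij: "i < n" "j < nc" using B C by auto
    have "(B * C) $$ (i, j) = (B *\<^sub>v col C j) $ i" using ij B C by simp
    also have "col C j = X j" unfolding C_def using X ij by simp
    also have "B *\<^sub>v X j = col A j" using X[OF ij(2)] by simp
    also have "col A j $ i = A $$ (i, j)" using ij A by simp
    finally show "A $$ (i, j) = (B * C) $$ (i, j)" by simp
  qed (use A B C in auto)
  then show ?thesis by (rule that[OF B C]) (use S bs colsB in auto)
qed

lemma mult_left_cancel_lin_indpt_cols:
  assumes B: "B \<in> carrier_mat n r" and indpt: "lin_indpt (set (cols B))" "distinct (cols B)"
    and X: "X \<in> carrier_mat r nc" and Y: "Y \<in> carrier_mat r nc" and eq: "B * X = B * Y"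
  shows "X = Y"
proof (rule eq_matI)
  fix i j assume "i < dim_row Y" and "j < dim_col Y"
  then have ij: "i < r" "j < nc" using Y by auto
  define v where "v = col X j - col Y j"
  have v: "v \<in> carrier_vec r" unfolding v_def using X Y by (intro carrier_vecI) auto
  have "B *\<^sub>v v = B *\<^sub>v col X j - B *\<^sub>v col Y j"
    unfolding v_def using B X Y by (intro mult_minus_distrib_mat_vec) auto
  also have "\<dots> = 0\<^sub>v n"
    using eq col_mult2[OF B X ij(2)] col_mult2[OF B Y ij(2)] B by auto
  finally have Bv: "B *\<^sub>v v = 0\<^sub>v n" .
  have "v = 0\<^sub>v r"
  proof (rule ccontr)
    assume "v \<noteq> 0\<^sub>v r"
    from lin_depI[OF B v this Bv indpt(2)] indpt(1) show False by simp
  qed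
  then have "v $ i = 0" using ij by simp
  then show "X $$ (i, j) = Y $$ (i, j)" using ij X Y unfolding v_def by simp
qed (use X Y in auto)

lemma trace_idempotent_eq_rank:
  assumes P: "P \<in> carrier_mat n n" and idem: "P * P = P"
  shows "(\<Sum>i<n. P $$ (i, i)) = of_nat (rank P)"
proof -
  obtain B C where B: "B \<in> carrier_mat n (rank P)" and C: "C \<in> carrier_mat (rank P) n"
    and PBC: "P = B * C" and cols: "set (cols B) \<subseteq> set (cols P)"
    and indpt: "distinct (cols B)" "lin_indpt (set (cols B))"
    using rank_factorization[OF P] by blast
  have "B * (C * B) = P * B" using PBC assoc_mult_mat[OF B C B] by simp
  also have "\<dots> = B * 1\<^sub>m (rank P)"
    using idempotent_mult_cols[OF P idem B cols] right_mult_one_mat[OF B] by simp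
  finally have CB: "C * B = 1\<^sub>m (rank P)"
    by (rule mult_left_cancel_lin_indpt_cols[OF B indpt(2,1) mult_carrier_mat[OF C B] one_carrier_mat])
  show ?thesis using trace_mult_comm[OF B C] PBC CB by simp
qed

end

lemma mat_trace_orth_proj:
  assumes "orth_proj k m Q"
  shows "mat_trace Q = of_nat m"
  using assms vec_space.trace_idempotent_eq_rank[of Q k]
  unfolding orth_proj_def mat_trace_def by auto

lemma mat_trace_mult:
  assumes "Q \<in> carrier_mat k k" and "R \<in> carrier_mat k k"
  shows "mat_trace (Q * R) = (\<Sum>r<k. \<Sum>s<k. Q $$ (r, s) * R $$ (s, r))"
  unfolding mat_trace_def using assms
  by (intro sum.cong) (auto simp: scalar_prod_def lessThan_atLeast0)

lemma sum_mat_trace_frame: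
  assumes car: "\<And>i. i < n \<Longrightarrow> P i \<in> carrier_mat k k"
    and frame: "\<And>r s. r < k \<Longrightarrow> s < k \<Longrightarrow> (\<Sum>i<n. P i $$ (r, s)) = (if r = s then a else 0)"
  shows "(\<Sum>i<n. mat_trace (P i)) = of_nat k * a"
proof -
  have "(\<Sum>i<n. mat_trace (P i)) = (\<Sum>r<k. \<Sum>i<n. P i $$ (r, r))"
    using car unfolding mat_trace_def by (subst sum.swap) (intro sum.cong, auto)
  also have "\<dots> = of_nat k * a" using frame by simp
  finally show ?thesis .
qed

lemma sum_mat_trace_mult_frame:
  assumes Q: "Q \<in> carrier_mat k k" and car: "\<And>i. i < n \<Longrightarrow> P i \<in> carrier_mat k k"
    and frame: "\<And>r s. r < k \<Longrightarrow> s < k \<Longrightarrow> (\<Sum>i<n. P i $$ (r, s)) = (if r = s then a else 0)"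
  shows "(\<Sum>j<n. mat_trace (Q * P j)) = a * mat_trace Q"
proof -
  have "(\<Sum>j<n. mat_trace (Q * P j)) = (\<Sum>j<n. \<Sum>r<k. \<Sum>s<k. Q $$ (r, s) * P j $$ (s, r))"
    using Q car by (intro sum.cong) (simp_all add: mat_trace_mult)
  also have "\<dots> = (\<Sum>r<k. \<Sum>s<k. \<Sum>j<n. Q $$ (r, s) * P j $$ (s, r))"
    by (subst sum.swap) (intro sum.cong refl sum.swap)
  also have "\<dots> = (\<Sum>r<k. \<Sum>s<k. Q $$ (r, s) * (\<Sum>j<n. P j $$ (s, r)))"
    by (simp add: sum_distrib_left)
  also have "\<dots> = (\<Sum>r<k. \<Sum>s<k. Q $$ (r, s) * (if s = r then a else 0))"
    using frame by (intro sum.cong refl) auto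
  also have "\<dots> = (\<Sum>r<k. Q $$ (r, r) * a)"
    by (intro sum.cong refl) (simp add: if_distrib cong: if_cong)
  also have "\<dots> = a * mat_trace Q"
    using Q unfolding mat_trace_def by (simp add: sum_distrib_left mult.commute)
  finally show ?thesis .
qed

lemma equichordal_constant_identity:
  assumes frame: "tight_fusion_frame k m n P" and n: "2 \<le> n"
    and c: "\<And>i j. i < n \<Longrightarrow> j < n \<Longrightarrow> i \<noteq> j \<Longrightarrow> mat_trace (P i * P j) = c"
  shows "of_nat k * of_nat k * c * of_int (int n - 1) = of_int (int k * int m * (int m * int n - int k))"
proof -
  obtain A :: real where sum: "\<And>r s. r < k \<Longrightarrow> s < k \<Longrightarrow>
      (\<Sum>i<n. P i $$ (r, s)) = (if r = s then complex_of_real A else 0)"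
    using frame unfolding tight_fusion_frame_def by auto
  have "\<And>i. i < n \<Longrightarrow> orth_proj k m (P i)" using frame unfolding tight_fusion_frame_def by auto
  then have car: "\<And>i. i < n \<Longrightarrow> P i \<in> carrier_mat k k"
    and idem: "\<And>i. i < n \<Longrightarrow> P i * P i = P i"
    and tr: "\<And>i. i < n \<Longrightarrow> mat_trace (P i) = of_nat m"
    using mat_trace_orth_proj unfolding orth_proj_def by auto
  have bound: "of_nat n * of_nat m = of_nat k * complex_of_real A"
    using sum_mat_trace_frame[OF car sum] tr by simp
  have "{..<n} = insert 0 {1..<n}" using n by auto
  then have "complex_of_real A * of_nat m = mat_trace (P 0 * P 0) + (\<Sum>j\<in>{1..<n}. mat_trace (P 0 * P j))"
    using sum_mat_trace_mult_frame[OF car car sum, of 0] tr n by simp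
  also have "\<dots> = of_nat m + of_nat (n - 1) * c"
    using idem tr c n by simp
  finally have row: "complex_of_real A * of_nat m = of_nat m + of_nat (n - 1) * c" .
  have "of_int (int n - 1) = (of_nat (n - 1) :: complex)" using n by simp
  then show ?thesis
    using arg_cong[OF row, of "\<lambda>x. of_nat k * of_nat k * x"] bound
    by (simp add: algebra_simps)
qed

lemma subring_of_algebraic_integers_sum:
  assumes R: "subring_of_algebraic_integers R" and f: "\<And>x. x \<in> F \<Longrightarrow> f x \<in> R"
  shows "sum f F \<in> R"
  using f R unfolding subring_of_algebraic_integers_def
  by (induction F rule: infinite_finite_induct) auto

lemma algebraic_int_quotient_Ints:
  fixes z :: complex
  assumes alg: "algebraic_int z" and z: "z * of_int d = of_int a" and d: "d \<noteq> 0"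
  shows "(of_int a / of_int d :: real) \<in> \<int>"
proof -
  have z_eq: "z = of_real (of_int a / of_int d)" using z d by (simp add: eq_divide_eq)
  then have "z \<in> \<rat>" by simp
  with alg have "z \<in> \<int>" by (rule rational_algebraic_int_is_int)
  then obtain t where "z = of_int t" by (auto elim: Ints_cases)
  then have "of_int a / of_int d = (of_int t :: real)"
    using z_eq by (metis of_real_eq_iff of_real_of_int_eq)
  then show ?thesis by simp
qed

theorem mainTheorem3:
  fixes \<A> :: "complex set" and k m n :: nat and P :: "nat \<Rightarrow> complex mat"
  assumes "subring_of_algebraic_integers \<A>"
    and "tight_fusion_frame k m n P"
    and "equichordal n P"
    and "\<forall>i<n. \<forall>r<k. \<forall>s<k. of_nat k * P i $$ (r, s) \<in> \<A>"
  shows "(of_int (int k * int m * (int m * int n - int k)) / of_int (int n - 1) :: real) \<in> \<int>"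
proof (cases "n \<le> 1")
  case True
  \<comment> \<open>the denominator is \<open>-1\<close> or \<open>0\<close>, and \<open>x / 0 = 0\<close>\<close>
  then have "n = 0 \<or> n = 1" by auto
  then show ?thesis by auto
next
  case False
  obtain c where c: "\<And>i j. i < n \<Longrightarrow> j < n \<Longrightarrow> i \<noteq> j \<Longrightarrow> mat_trace (P i * P j) = c"
    using assms(3) unfolding equichordal_def by auto
  have car: "\<And>i. i < n \<Longrightarrow> P i \<in> carrier_mat k k"
    using assms(2) unfolding tight_fusion_frame_def orth_proj_def by auto
  have "of_nat k * of_nat k * c = of_nat k * of_nat k * mat_trace (P 0 * P 1)"
    using c[of 0 1] False by simp
  also have "\<dots> = (\<Sum>r<k. \<Sum>s<k. (of_nat k * P 0 $$ (r, s)) * (of_nat k * P 1 $$ (s, r)))"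
    using mat_trace_mult[OF car car] False by (simp add: sum_distrib_left mult_ac)
  also have "\<dots> \<in> \<A>"
    using assms(1,4) False
    by (intro subring_of_algebraic_integers_sum[OF assms(1)]) (auto simp: subring_of_algebraic_integers_def)
  finally have "algebraic_int (of_nat k * of_nat k * c)"
    using assms(1) unfolding subring_of_algebraic_integers_def by auto
  then show ?thesis
    by (rule algebraic_int_quotient_Ints[OF _ equichordal_constant_identity[OF assms(2) _ c]])
      (use False in auto)
qed

end
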